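(* Let $(A,\mu)$ be a commutative associative algebra (with $\mu(a\otimes b)=a\cdot b$), let $\gamma:A\to A$ be an algebra map and let $D:A\to A$ be a linear map with $D(a\cdot b)=\gamma(a)\cdot D(b)+D(a)\cdot\gamma(b)$ for all $a,b\in A$. Assume moreover that $D\circ\gamma=\gamma\circ D$. Define a new multiplication on $A$ by $a\ast b=a\cdot D(b)$. Then $(A,\ast,\mathrm{id}_A,\gamma)$ is a BiHom-Novikov algebra.
   Context: Work over a field. A BiHom-Novikov algebra is a 4-tuple $(A,\mu,\alpha,\beta)$ with $\mu:A\otimes A\to A$ (written $x\cdot y$) and commuting linear maps $\alpha,\beta:A\to A$ such that for all $x,y,z\in A$: $\alpha(x\cdot y)=\alpha(x)\cdot\alpha(y)$, $\beta(x\cdot y)=\beta(x)\cdot\beta(y)$, $(\beta(x)\cdot\alpha(y))\cdot\beta(z)-\alpha\beta(x)\cdot(\alpha(y)\cdot z)=(\beta(y)\cdot\alpha(x))\cdot\beta(z)-\alpha\beta(y)\cdot(\alpha(x)\cdot z)$, and $(x\cdot\beta(y))\cdot\alpha\beta(z)=(x\cdot\beta(z))\cdot\alpha\beta(y)$. *)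

theory Defs
  imports Main "HOL.Vector_Spaces"
begin

definition comm_assoc_algebra :: "('k::field \<Rightarrow> 'a::comm_ring \<Rightarrow> 'a) \<Rightarrow> bool" where
  "comm_assoc_algebra scale \<longleftrightarrow> Vector_Spaces.vector_space scale \<and>
     (\<forall>c a b. scale c (a * b) = scale c a * b \<and> scale c (a * b) = a * scale c b)"

definition BiHom_Novikov ::
  "('k::field \<Rightarrow> 'a::ab_group_add \<Rightarrow> 'a) \<Rightarrow> ('a \<Rightarrow> 'a \<Rightarrow> 'a) \<Rightarrow> ('a \<Rightarrow> 'a) \<Rightarrow> ('a \<Rightarrow> 'a) \<Rightarrow> bool" where
  "BiHom_Novikov scale mu \<alpha> \<beta> \<longleftrightarrow>
     Vector_Spaces.vector_space scale \<and>
     (\<forall>x. Vector_Spaces.linear scale scale (mu x)) \<and>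
     (\<forall>y. Vector_Spaces.linear scale scale (\<lambda>x. mu x y)) \<and>
     Vector_Spaces.linear scale scale \<alpha> \<and> Vector_Spaces.linear scale scale \<beta> \<and>
     \<alpha> \<circ> \<beta> = \<beta> \<circ> \<alpha> \<and>
     (\<forall>x y. \<alpha> (mu x y) = mu (\<alpha> x) (\<alpha> y)) \<and>
     (\<forall>x y. \<beta> (mu x y) = mu (\<beta> x) (\<beta> y)) \<and>
     (\<forall>x y z. mu (mu (\<beta> x) (\<alpha> y)) (\<beta> z) - mu (\<alpha> (\<beta> x)) (mu (\<alpha> y) z)
            = mu (mu (\<beta> y) (\<alpha> x)) (\<beta> z) - mu (\<alpha> (\<beta> y)) (mu (\<alpha> x) z)) \<and>
     (\<forall>x y z. mu (mu x (\<beta> y)) (\<alpha> (\<beta> z)) = mu (mu x (\<beta> z)) (\<alpha> (\<beta> y)))"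

end

theory Submission
  imports Defs
begin

text \<open>Since \<open>a \<ast> b = a D(b)\<close> and \<open>\<beta> = \<gamma>\<close> commutes with \<open>D\<close>, both sides of the second
  BiHom-Novikov identity are \<open>x D(\<gamma> y) D(\<gamma> z)\<close> up to commutativity. For the first one,
  the \<open>\<gamma>\<close>-twisted Leibniz rule expands \<open>\<gamma>(x) D(y D z)\<close> into
  \<open>\<gamma>(x) \<gamma>(y) D(D z) + \<gamma>(x) D(y) \<gamma>(D z)\<close>; the second summand cancels the term
  \<open>(\<gamma>(x) D y) D(\<gamma> z)\<close>, and what remains is symmetric in \<open>x\<close> and \<open>y\<close>.\<close>

lemma comm_assoc_algebra_linear_mult_left:
  assumes "comm_assoc_algebra scale"
  shows "Vector_Spaces.linear scale scale (\<lambda>b. a * b)"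
  using assms unfolding comm_assoc_algebra_def Vector_Spaces.linear_iff
  by (metis distrib_left)

lemma comm_assoc_algebra_linear_mult_right:
  assumes "comm_assoc_algebra scale"
  shows "Vector_Spaces.linear scale scale (\<lambda>a. a * b)"
  using assms unfolding comm_assoc_algebra_def Vector_Spaces.linear_iff
  by (simp add: distrib_right)

lemma comm_assoc_algebra_linear_id:
  assumes "comm_assoc_algebra scale"
  shows "Vector_Spaces.linear scale scale id"
  using assms unfolding comm_assoc_algebra_def Vector_Spaces.linear_iff by simp

lemma twisted_derivation_left_symmetric:
  fixes \<gamma> D :: "'a::comm_ring \<Rightarrow> 'a"
  assumes D_der: "\<And>a b. D (a * b) = \<gamma> a * D b + D a * \<gamma> b"
    and comm: "\<And>a. D (\<gamma> a) = \<gamma> (D a)"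
  shows "\<gamma> x * D y * D (\<gamma> z) - \<gamma> x * D (y * D z)
       = \<gamma> y * D x * D (\<gamma> z) - \<gamma> y * D (x * D z)"
  by (simp add: D_der comm algebra_simps)

theorem proposition2p11:
  fixes scale :: "'k::field \<Rightarrow> 'a::comm_ring \<Rightarrow> 'a"
    and \<gamma> D :: "'a \<Rightarrow> 'a"
  assumes alg: "comm_assoc_algebra scale"
    and \<gamma>_lin: "Vector_Spaces.linear scale scale \<gamma>"
    and \<gamma>_mult: "\<And>a b. \<gamma> (a * b) = \<gamma> a * \<gamma> b"
    and D_lin: "Vector_Spaces.linear scale scale D"
    and D_der: "\<And>a b. D (a * b) = \<gamma> a * D b + D a * \<gamma> b"
    and comm: "D \<circ> \<gamma> = \<gamma> \<circ> D"
  shows "BiHom_Novikov scale (\<lambda>a b. a * D b) id \<gamma>"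
proof -
  have D_\<gamma>: "\<And>a. D (\<gamma> a) = \<gamma> (D a)"
    using comm by (metis comp_apply)
  have vs: "Vector_Spaces.vector_space scale"
    using alg unfolding comm_assoc_algebra_def by blast
  have lin_left: "Vector_Spaces.linear scale scale (\<lambda>b. a * D b)" for a
    using Vector_Spaces.linear_compose[OF D_lin comm_assoc_algebra_linear_mult_left[OF alg]]
    by (simp add: comp_def)
  have lin_right: "Vector_Spaces.linear scale scale (\<lambda>a. a * D b)" for b
    using comm_assoc_algebra_linear_mult_right[OF alg] .
  have right_commutative: "x * D (\<gamma> y) * D (\<gamma> z) = x * D (\<gamma> z) * D (\<gamma> y)" for x y z
    by (simp add: algebra_simps)
  show ?thesis
    unfolding BiHom_Novikov_def
    using vs lin_left lin_right comm_assoc_algebra_linear_id[OF alg] \<gamma>_lin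
      twisted_derivation_left_symmetric[OF D_der D_\<gamma>] right_commutative
    by (simp add: \<gamma>_mult D_\<gamma> mult.commute)
qed

end
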